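(* Let $u$ be a one-sided Sturmian sequence with left special sequence $l=l_1l_2\dots$. Let $xl_1l_2\dots l_{n-1}$ and $wl_1\dots l_{m-1}$ with $1\le m<n$ and $x,w\in\{0,1\}$ be consecutive right special significant blocks of $\tilde X_u$, and let $y\in\{0,1\}$ with $y\neq l_n$. If $x\neq w$, then the HB diagram of $X_u^+$ contains the arrow $xl_1\dots l_{n-1}\to wl_1\dots l_{m-1}l_m$. If $x=w$, then it contains the arrow $xl_1\dots l_{n-1}\to\mathrm{sig}(wl_1\dots l_{m-1}y)$.
   Context: A sequence $u\in\{0,1\}^{\mathbb N}$ is Sturmian if for every $n\ge1$ exactly $n+1$ distinct blocks of length $n$ occur in $u$. $X_u^+$ is the closure of $\{\sigma^n u:n\in\mathbb N\}$, $\sigma$ the shift $(\sigma x)_i=x_{i+1}$, and $\tilde X_u=\{x\in\{0,1\}^{\mathbb Z}: x_px_{p+1}\dots\in X_u^+\ \forall p\}$; the languages of $u$, $X_u^+$, $\tilde X_u$ coincide. For each $n$ there is a unique block $L_n$ of length $n$ with $0L_n$ and $1L_n$ in the language; these are the prefixes $L_n=l_1\dots l_n$ of the left special sequence $l$. A block $v$ is right special if both $v0$ and $v1$ are in the language; the right special block of length $n$ is $l_nl_{n-1}\dots l_1$. For a block $a_{-n}\dots a_0$ in the language, $\mathrm{fol}(a_{-n}\dots a_0)=\{b_0b_1\dots\in X_u^+:\exists b\in\tilde X_u,\ b_{-n}\dots b_0=a_{-n}\dots a_0\}$. A block $a_{-n}\dots a_0$ ($n\ge1$) is significant if $\mathrm{fol}(a_{-n}\dots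 a_0)\subsetneq\mathrm{fol}(a_{-n+1}\dots a_0)$; $0$ and $1$ are also significant. $\mathrm{sig}(\cdot)$ is the longest significant suffix. The HB diagram has vertex set the significant blocks and an arrow $\alpha\to\beta$ iff there is a symbol $b$ with $\alpha b$ in the language and $\beta=\mathrm{sig}(\alpha b)$. For $m=1$ the block $wl_1\dots l_{m-1}$ is the single symbol $w$. The two blocks being consecutive means both are right special significant blocks and there is no right special significant block of length strictly between $m$ and $n$. *)

theory Defs
  imports "HOL-Analysis.Analysis" "HOL-Library.Sublist"
begin

text \<open>Symbols: the alphabet {0,1} is represented by bool, with 0 = False and 1 = True.
  One-sided sequences are functions nat => bool (with the product topology of the
  discrete space bool), two-sided sequences are functions int => bool,
  blocks are bool lists.\<close>

definition factor :: "(nat \<Rightarrow> bool) \<Rightarrow> nat \<Rightarrow> nat \<Rightarrow> bool list" where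
  "factor u k n = map (\<lambda>i. u (k + i)) [0..<n]"

definition lang :: "(nat \<Rightarrow> bool) \<Rightarrow> bool list set" where
  "lang u = {factor u k n | k n. True}"

definition sturmian :: "(nat \<Rightarrow> bool) \<Rightarrow> bool" where
  "sturmian u \<longleftrightarrow> (\<forall>n\<ge>1. card {v \<in> lang u. length v = n} = n + 1)"

definition shift :: "(nat \<Rightarrow> bool) \<Rightarrow> (nat \<Rightarrow> bool)" where
  "shift x = (\<lambda>i. x (Suc i))"

definition Xplus :: "(nat \<Rightarrow> bool) \<Rightarrow> (nat \<Rightarrow> bool) set" where
  "Xplus u = closure {(shift ^^ n) u | n. True}"

definition Xtilde :: "(nat \<Rightarrow> bool) \<Rightarrow> (int \<Rightarrow> bool) set" where
  "Xtilde u = {x. \<forall>p::int. (\<lambda>i::nat. x (p + int i)) \<in> Xplus u}"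

text \<open>fol of a nonempty block a = a_{-n} ... a_0 (list of length n+1,
  with a ! j = a_{j-n}).\<close>
definition fol :: "(nat \<Rightarrow> bool) \<Rightarrow> bool list \<Rightarrow> (nat \<Rightarrow> bool) set" where
  "fol u a = {c \<in> Xplus u. \<exists>b \<in> Xtilde u.
      (\<forall>j < length a. b (int j - int (length a - 1)) = a ! j) \<and>
      (\<forall>i::nat. c i = b (int i))}"

definition significant :: "(nat \<Rightarrow> bool) \<Rightarrow> bool list \<Rightarrow> bool" where
  "significant u a \<longleftrightarrow> a \<in> lang u \<and>
     (length a = 1 \<or> (length a \<ge> 2 \<and> fol u a \<subset> fol u (tl a)))"

definition sig :: "(nat \<Rightarrow> bool) \<Rightarrow> bool list \<Rightarrow> bool list" where
  "sig u a = (THE s. suffix s a \<and> significant u s \<and>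
      (\<forall>t. suffix t a \<and> significant u t \<longrightarrow> length t \<le> length s))"

definition hb_arrow :: "(nat \<Rightarrow> bool) \<Rightarrow> bool list \<Rightarrow> bool list \<Rightarrow> bool" where
  "hb_arrow u \<alpha> \<beta> \<longleftrightarrow> significant u \<alpha> \<and> significant u \<beta> \<and>
     (\<exists>b. \<alpha> @ [b] \<in> lang u \<and> \<beta> = sig u (\<alpha> @ [b]))"

definition right_special :: "(nat \<Rightarrow> bool) \<Rightarrow> bool list \<Rightarrow> bool" where
  "right_special u v \<longleftrightarrow> v @ [False] \<in> lang u \<and> v @ [True] \<in> lang u"

text \<open>L_n = l_1 ... l_n, where l is indexed from 1.\<close>
definition Lblock :: "(nat \<Rightarrow> bool) \<Rightarrow> nat \<Rightarrow> bool list" where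
  "Lblock l n = map l [1..<Suc n]"

definition left_special_seq :: "(nat \<Rightarrow> bool) \<Rightarrow> (nat \<Rightarrow> bool) \<Rightarrow> bool" where
  "left_special_seq u l \<longleftrightarrow>
     (\<forall>n. False # Lblock l n \<in> lang u \<and> True # Lblock l n \<in> lang u)"

definition consecutive_rs :: "(nat \<Rightarrow> bool) \<Rightarrow> bool list \<Rightarrow> bool list \<Rightarrow> bool" where
  "consecutive_rs u \<alpha> \<beta> \<longleftrightarrow>
     right_special u \<alpha> \<and> significant u \<alpha> \<and> right_special u \<beta> \<and> significant u \<beta> \<and>
     \<not> (\<exists>v. right_special u v \<and> significant u v \<and>
            min (length \<alpha>) (length \<beta>) < length v \<and> length v < max (length \<alpha>) (length \<beta>))"

end

theory Submission
  imports Defs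
begin

text \<open>Since there are \<open>n + 1\<close> factors of each length \<open>n\<close>, the right special and the left
  special factor of each length are unique. A balance argument, running once around the
  Rauzy graph, shows that a right special factor \<open>r w\<close> and a left special factor \<open>w x\<close> satisfy
  \<open>r = x\<close>; so \<open>x = l\<^sub>n\<close>, \<open>w = l\<^sub>m\<close>, and the shorter block is a suffix of the longer one.

  For \<open>b \<noteq> l\<^sub>n\<close> every significant suffix of \<open>x l\<^sub>1 \<dots> l\<^sub>n\<^sub>-\<^sub>1 b\<close> has length at most
  \<open>m + 1\<close>: the whole block is not significant because \<open>l\<^sub>1 \<dots> l\<^sub>n\<^sub>-\<^sub>1 b\<close> is not left special,
  and removing \<open>b\<close> from a longer significant suffix would leave a right special significant
  block strictly between the two consecutive ones. With \<open>b = y\<close> this identifies the target of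
  the arrow as \<open>sig (w l\<^sub>1 \<dots> l\<^sub>m\<^sub>-\<^sub>1 y)\<close>. If \<open>x \<noteq> w\<close>, then \<open>b = l\<^sub>m\<close> is allowed and
  \<open>w l\<^sub>1 \<dots> l\<^sub>m\<close> is itself significant: its left extension by \<open>x\<close> continues to
  \<open>x l\<^sub>1 \<dots> l\<^sub>n\<^sub>-\<^sub>1 (\<not> l\<^sub>n)\<close>, which is impossible after \<open>w\<close>, as \<open>w l\<^sub>1 \<dots> l\<^sub>n\<^sub>-\<^sub>1\<close> would then
  be a second right special factor of length \<open>n\<close>.\<close>

section \<open>Factors and the language\<close>

lemma length_factor [simp]: "length (factor u k n) = n"
  by (simp add: factor_def)

lemma nth_factor [simp]: "i < n \<Longrightarrow> factor u k n ! i = u (k + i)"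
  by (simp add: factor_def)

lemma factor_add: "factor u k (a + b) = factor u k a @ factor u (k + a) b"
  by (rule nth_equalityI) (auto simp: nth_append add.assoc)

lemma factor_Suc: "factor u k (Suc n) = factor u k n @ [u (k + n)]"
  by (simp add: factor_def)

lemma factor_Suc_Cons: "factor u k (Suc n) = u k # factor u (Suc k) n"
  by (simp add: list_eq_iff_nth_eq nth_Cons split: nat.split)

lemma factor_in_lang [simp]: "factor u k n \<in> lang u"
  unfolding lang_def by auto

lemma lang_iff_factor: "v \<in> lang u \<longleftrightarrow> (\<exists>k. factor u k (length v) = v)"
  unfolding lang_def by (auto, metis length_factor)

lemma Nil_in_lang [simp]: "[] \<in> lang u"
  using factor_in_lang[of u 0 0] by (simp add: factor_def)

lemma lang_sublist: "sublist v w \<Longrightarrow> w \<in> lang u \<Longrightarrow> v \<in> lang u"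
proof -
  assume "sublist v w" "w \<in> lang u"
  then obtain p s k where w: "w = p @ v @ s" and k: "factor u k (length w) = w"
    by (auto simp: sublist_def lang_iff_factor)
  have "factor u k (length p + (length v + length s)) = p @ v @ s"
    using k w by simp
  then have "factor u (k + length p) (length v) = v"
    by (simp add: factor_add)
  then show "v \<in> lang u" by (metis factor_in_lang)
qed

lemma lang_prefix: "v @ s \<in> lang u \<Longrightarrow> v \<in> lang u"
  by (rule lang_sublist) auto

lemma lang_suffix: "p @ v \<in> lang u \<Longrightarrow> v \<in> lang u"
  by (rule lang_sublist) auto

lemma lang_Cons: "a # v \<in> lang u \<Longrightarrow> v \<in> lang u"
  using lang_suffix[of "[a]" v] by simp

lemma lang_snoc_ex: "v \<in> lang u \<Longrightarrow> \<exists>c. v @ [c] \<in> lang u"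
  by (metis factor_Suc factor_in_lang lang_iff_factor)

section \<open>Complexity and special factors\<close>

definition langn :: "(nat \<Rightarrow> bool) \<Rightarrow> nat \<Rightarrow> bool list set" where
  "langn u n = {v \<in> lang u. length v = n}"

definition left_special :: "(nat \<Rightarrow> bool) \<Rightarrow> bool list \<Rightarrow> bool" where
  "left_special u v \<longleftrightarrow> False # v \<in> lang u \<and> True # v \<in> lang u"

lemma finite_langn [simp]: "finite (langn u n)"
proof -
  have "langn u n \<subseteq> {xs. set xs \<subseteq> UNIV \<and> length xs = n}" by (auto simp: langn_def)
  then show ?thesis using finite_lists_length_eq[of "UNIV :: bool set" n] finite_subset by auto
qed

lemma langn_0: "langn u 0 = {[]}"
  by (auto simp: langn_def)

lemma card_langn_sturmian: "sturmian u \<Longrightarrow> 1 \<le> n \<Longrightarrow> card (langn u n) = n + 1"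
  unfolding sturmian_def langn_def by auto

lemma right_special_iff: "right_special u v \<longleftrightarrow> (\<forall>c. v @ [c] \<in> lang u)"
  unfolding right_special_def by (metis (full_types))

lemma left_special_iff: "left_special u v \<longleftrightarrow> (\<forall>c. c # v \<in> lang u)"
  unfolding left_special_def by (metis (full_types))

lemma right_special_suffix: "right_special u (p @ v) \<Longrightarrow> right_special u v"
  unfolding right_special_iff using lang_suffix[of p] by (metis append.assoc)

lemma card_add_le_if_disjoint_images:
  assumes "finite B" "f ` A \<subseteq> B" "g ` C \<subseteq> B" "inj_on f A" "inj_on g C" "f ` A \<inter> g ` C = {}"
  shows "card A + card C \<le> card B"
proof -
  have "card A + card C = card (f ` A \<union> g ` C)"
  proof -
    have "finite A" "finite C"
      using assms(1-5) by (meson finite_imageD finite_subset)+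
    then show ?thesis using assms(4-6) by (simp add: card_Un_disjoint card_image)
  qed
  also have "\<dots> \<le> card B" using assms(1-3) by (simp add: card_mono)
  finally show ?thesis .
qed

text \<open>Each factor of length \<open>n\<close> has one extension of length \<open>n + 1\<close> chosen by \<open>SOME\<close>; the
  special factors contribute the other one. This bounds the number of special factors of
  length \<open>n\<close> by \<open>p(n + 1) - p(n)\<close>, which is \<open>1\<close> for Sturmian sequences.\<close>

lemma card_right_special_le:
  "card (langn u n) + card {v. length v = n \<and> right_special u v} \<le> card (langn u (Suc n))"
proof (rule card_add_le_if_disjoint_images)
  let ?c = "\<lambda>v. SOME c. v @ [c] \<in> lang u"
  have c: "v @ [?c v] \<in> lang u" if "v \<in> lang u" for v
    using someI_ex[OF lang_snoc_ex[OF that]] .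
  show "(\<lambda>v. v @ [?c v]) ` langn u n \<subseteq> langn u (Suc n)"
    using c by (auto simp: langn_def)
  show "(\<lambda>v. v @ [\<not> ?c v]) ` {v. length v = n \<and> right_special u v} \<subseteq> langn u (Suc n)"
    by (auto simp: langn_def right_special_iff)
qed (auto intro: inj_onI)

lemma card_left_special_le:
  assumes "\<And>v. v \<in> lang u \<Longrightarrow> \<exists>c. c # v \<in> lang u"
  shows "card (langn u n) + card {v. length v = n \<and> left_special u v} \<le> card (langn u (Suc n))"
proof (rule card_add_le_if_disjoint_images)
  let ?c = "\<lambda>v. SOME c. c # v \<in> lang u"
  have c: "?c v # v \<in> lang u" if "v \<in> lang u" for v
    using someI_ex[OF assms[OF that]] .
  show "(\<lambda>v. ?c v # v) ` langn u n \<subseteq> langn u (Suc n)"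
    using c by (auto simp: langn_def)
  show "(\<lambda>v. (\<not> ?c v) # v) ` {v. length v = n \<and> left_special u v} \<subseteq> langn u (Suc n)"
    by (auto simp: langn_def left_special_iff)
qed (auto intro: inj_onI)

lemma card_le_1_sturmian:
  assumes "sturmian u" and "finite S" and "S \<subseteq> {v. length v = n}"
    and "card (langn u n) + card S \<le> card (langn u (Suc n))"
  shows "card S \<le> 1"
proof (cases n)
  case 0
  then have "S \<subseteq> {[]}" using assms(3) by auto
  then show ?thesis using card_mono[of "{[]}" S] by simp
next
  case (Suc k)
  then show ?thesis using assms(4) card_langn_sturmian[OF assms(1)] by simp
qed

lemma sturmian_right_special_unique:
  assumes "sturmian u" "right_special u v" "right_special u v'" "length v = length v'"
  shows "v = v'"
proof -
  let ?S = "{z. length z = length v \<and> right_special u z}"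
  have "finite ?S"
    by (rule finite_subset[OF _ finite_langn[of u "length v"]])
       (auto simp: langn_def right_special_def dest: lang_prefix)
  then have "card ?S \<le> 1"
    using card_le_1_sturmian[OF assms(1)] card_right_special_le by blast
  with \<open>finite ?S\<close> show ?thesis using assms(2-4) by (auto simp: card_le_Suc0_iff_eq)
qed

lemma factor_Suc_eq_tl: "factor u (Suc t) n = tl (factor u t n @ [u (t + n)])"
  using factor_Suc[of u t n] factor_Suc_Cons[of u t n] by (metis list.sel(3))

lemma factor_eq_butlast: "factor u t n = butlast (u t # factor u (Suc t) n)"
  using factor_Suc[of u t n] factor_Suc_Cons[of u t n] by (metis butlast_snoc)

lemma right_special_of_two: "v @ [a] \<in> lang u \<Longrightarrow> v @ [b] \<in> lang u \<Longrightarrow> a \<noteq> b \<Longrightarrow> right_special u v"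
  unfolding right_special_def by (cases a; cases b) auto

lemma left_special_of_two: "a # v \<in> lang u \<Longrightarrow> b # v \<in> lang u \<Longrightarrow> a \<noteq> b \<Longrightarrow> left_special u v"
  unfolding left_special_def by (cases a; cases b) auto

lemma factor_Suc_eq_if_not_right_special:
  assumes "factor u t n = factor u t' n" and "\<not> right_special u (factor u t n)"
  shows "factor u (Suc t) n = factor u (Suc t') n"
proof -
  have "factor u t n @ [u (t + n)] \<in> lang u" "factor u t n @ [u (t' + n)] \<in> lang u"
    using factor_in_lang[of u t "Suc n"] factor_in_lang[of u t' "Suc n"] assms(1)
    by (simp_all only: factor_Suc)
  then have "u (t + n) = u (t' + n)"
    using assms(2) right_special_of_two by metis
  then show ?thesis using assms(1) by (simp add: factor_Suc_eq_tl)
qed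

lemma factor_eq_if_not_left_special:
  assumes "factor u (Suc t) n = factor u (Suc t') n" and "\<not> left_special u (factor u (Suc t) n)"
  shows "factor u t n = factor u t' n"
proof -
  have "u t # factor u (Suc t) n \<in> lang u" "u t' # factor u (Suc t) n \<in> lang u"
    using factor_in_lang[of u t "Suc n"] factor_in_lang[of u t' "Suc n"] assms(1)
    by (simp_all only: factor_Suc_Cons)
  then have "u t = u t'"
    using assms(2) left_special_of_two by metis
  then show ?thesis
    using assms(1) factor_eq_butlast[of u t n] factor_eq_butlast[of u t' n] by simp
qed

section \<open>Recurrence of Sturmian sequences\<close>

lemma eventually_periodic_if_no_right_special:
  assumes no_rs: "\<And>v. length v = k \<Longrightarrow> \<not> right_special z v"
  shows "\<exists>a p. 0 < p \<and> (\<forall>t\<ge>a. z (t + p) = z t)"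
proof -
  let ?W = "\<lambda>t. factor z t (Suc k)"
  have no_rs': "\<not> right_special z (?W t)" for t
  proof
    assume "right_special z (?W t)"
    then have "right_special z (factor z (Suc t) k)"
      using right_special_suffix[of z "[z t]"] by (simp add: factor_Suc_Cons)
    then show False using no_rs by simp
  qed
  have "finite (range ?W)"
    by (rule finite_subset[OF _ finite_langn[of z "Suc k"]]) (auto simp: langn_def)
  then have "\<not> inj ?W"
    using finite_imageD infinite_UNIV_nat by blast
  then obtain a b where "a < b" "?W a = ?W b"
    unfolding inj_def by (metis linorder_neqE_nat)
  have shifted: "?W (a + i) = ?W (b + i)" for i
  proof (induction i)
    case (Suc i)
    then show ?case
      using factor_Suc_eq_if_not_right_special[OF Suc no_rs'[of "a + i"]] by simp
  qed (use \<open>?W a = ?W b\<close> in simp)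
  show ?thesis
  proof (intro exI conjI allI impI)
    show "0 < b - a" using \<open>a < b\<close> by simp
    fix t assume "a \<le> t"
    have "?W (a + (t - a)) ! 0 = ?W (b + (t - a)) ! 0" by (simp only: shifted)
    then show "z (t + (b - a)) = z t" using \<open>a \<le> t\<close> \<open>a < b\<close> by (simp add: ac_simps)
  qed
qed

lemma card_langn_le_if_eventually_periodic:
  assumes "0 < p" and periodic: "\<forall>t\<ge>a. z (t + p) = z t"
  shows "card (langn z K) \<le> a + p"
proof -
  have reduce: "factor z t K \<in> (\<lambda>t. factor z t K) ` {..<a + p}" for t
  proof (induction t rule: less_induct)
    case (less t)
    show ?case
    proof (cases "t < a + p")
      case False
      have "z (t - p + i) = z (t + i)" for i
        using periodic[rule_format, of "t - p + i"] False by simp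
      then have "factor z (t - p) K = factor z t K"
        by (simp add: factor_def)
      then show ?thesis using less[of "t - p"] \<open>0 < p\<close> False by simp
    qed simp
  qed
  have "langn z K \<subseteq> (\<lambda>t. factor z t K) ` {..<a + p}"
  proof
    fix v assume "v \<in> langn z K"
    then obtain k where "factor z k K = v" by (auto simp: langn_def lang_iff_factor)
    then show "v \<in> (\<lambda>t. factor z t K) ` {..<a + p}" using reduce[of k] by simp
  qed
  then show ?thesis
    by (metis card_image_le card_lessThan card_mono finite_imageI finite_lessThan order_trans)
qed

text \<open>Morse--Hedlund: \<open>p(M) \<le> M\<close> for some \<open>M\<close> forces eventual periodicity.\<close>

lemma card_langn_bounded_if_le:
  assumes "card (langn z M) \<le> M"
  shows "\<exists>C. \<forall>K. card (langn z K) \<le> C"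
proof -
  have "\<exists>k<M. card (langn z (Suc k)) \<le> card (langn z k)"
  proof (rule ccontr)
    assume growing: "\<not> ?thesis"
    have "k \<le> M \<Longrightarrow> k + 1 \<le> card (langn z k)" for k
    proof (induction k)
      case (Suc k)
      then have "k < M" "k + 1 \<le> card (langn z k)" by simp_all
      moreover have "card (langn z k) < card (langn z (Suc k))"
        using growing \<open>k < M\<close> not_le by blast
      ultimately show ?case by simp
    qed (simp add: langn_0)
    then show False using assms by force
  qed
  then obtain k where "card (langn z (Suc k)) \<le> card (langn z k)" by blast
  then have "card {v. length v = k \<and> right_special z v} = 0"
    using card_right_special_le[of z k] by simp
  moreover have "finite {v. length v = k \<and> right_special z v}"
    by (rule finite_subset[OF _ finite_langn[of z k]])
       (auto simp: langn_def right_special_def dest: lang_prefix)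
  ultimately have "\<And>v. length v = k \<Longrightarrow> \<not> right_special z v" by auto
  then show ?thesis
    using eventually_periodic_if_no_right_special card_langn_le_if_eventually_periodic by metis
qed

text \<open>If the prefix of length \<open>N\<close> never recurred, the shifted sequence would have at most
  \<open>p(M) - 1 = M\<close> factors of length \<open>M \<ge> N\<close>, hence bounded complexity by Morse--Hedlund; but the
  complexity of \<open>u\<close> exceeds that of its shift by at most one.\<close>

lemma sturmian_prefix_recurs:
  assumes st: "sturmian u"
  shows "\<exists>k>0. factor u k N = factor u 0 N"
proof (rule ccontr)
  assume no_return: "\<not> ?thesis"
  define z where "z = (\<lambda>i. u (Suc i))"
  have factor_z: "factor z k M = factor u (Suc k) M" for k M
    by (simp add: z_def factor_def)
  define M where "M = max N 1"
  have "langn z M \<subseteq> langn u M - {factor u 0 M}"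
  proof
    fix v assume "v \<in> langn z M"
    then obtain k where "factor u (Suc k) M = v"
      by (auto simp: langn_def lang_iff_factor factor_z)
    then have v: "v = factor u (Suc k) M" ..
    have "take N (factor u j M) = factor u j N" for j
      using factor_add[of u j N "M - N"] by (simp add: M_def)
    then have "v \<noteq> factor u 0 M"
      using no_return v by (metis zero_less_Suc)
    then show "v \<in> langn u M - {factor u 0 M}" using v by (simp add: langn_def)
  qed
  then have "card (langn z M) \<le> card (langn u M - {factor u 0 M})"
    by (simp add: card_mono)
  also have "\<dots> = M" using card_langn_sturmian[OF st, of M] by (simp add: M_def langn_def)
  finally obtain C where C: "\<And>K. card (langn z K) \<le> C" using card_langn_bounded_if_le by blast
  have langn_u: "langn u K \<subseteq> insert (factor u 0 K) (langn z K)" for K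
  proof
    fix v assume "v \<in> langn u K"
    then obtain k where "factor u k K = v" by (auto simp: langn_def lang_iff_factor)
    then show "v \<in> insert (factor u 0 K) (langn z K)"
    proof (cases k)
      case (Suc j)
      then have "v = factor z j K" using \<open>factor u k K = v\<close> by (simp add: factor_z)
      then show ?thesis by (simp add: langn_def)
    qed simp
  qed
  have bounded: "card (langn u K) \<le> Suc C" for K
  proof -
    have "card (langn u K) \<le> card (insert (factor u 0 K) (langn z K))"
      using langn_u by (simp add: card_mono)
    also have "\<dots> \<le> Suc C" using C[of K] by (simp add: card_insert_if)
    finally show ?thesis .
  qed
  show False using bounded[of "Suc (Suc C)"] card_langn_sturmian[OF st, of "Suc (Suc C)"] by simp
qed

lemma sturmian_extends_left:
  assumes "sturmian u" "v \<in> lang u"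
  shows "\<exists>e. e # v \<in> lang u"
proof -
  obtain k where k: "factor u k (length v) = v" using assms(2) by (auto simp: lang_iff_factor)
  obtain k' where "0 < k'" "factor u k' (length v) = v"
    using sturmian_prefix_recurs[OF assms(1), of "length v"] k by (cases k) auto
  then have "factor u (k' - 1) (Suc (length v)) = u (k' - 1) # v"
    by (simp add: factor_Suc_Cons)
  then show ?thesis by (metis factor_in_lang)
qed

lemma sturmian_occurs_after:
  assumes "sturmian u" "v \<in> lang u"
  shows "\<exists>k\<ge>K. factor u k (length v) = v"
proof (induction K)
  case 0
  then show ?case using assms(2) by (auto simp: lang_iff_factor)
next
  case (Suc K)
  then obtain k where k: "K \<le> k" "factor u k (length v) = v" by blast
  obtain k' where k': "0 < k'" "factor u k' (k + length v) = factor u 0 (k + length v)"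
    using sturmian_prefix_recurs[OF assms(1)] by blast
  have "factor u (k' + k) (length v) = factor u k (length v)"
    using k'(2) by (simp add: factor_add add.assoc)
  then show ?case using k k' by (intro exI[of _ "k' + k"]) auto
qed

lemma sturmian_left_special_unique:
  assumes "sturmian u" "left_special u v" "left_special u v'" "length v = length v'"
  shows "v = v'"
proof -
  let ?S = "{z. length z = length v \<and> left_special u z}"
  have "finite ?S"
    by (rule finite_subset[OF _ finite_langn[of u "length v"]])
       (auto simp: langn_def left_special_def dest: lang_Cons)
  then have "card ?S \<le> 1"
    using card_le_1_sturmian[OF assms(1)]
      card_left_special_le[OF sturmian_extends_left[OF assms(1)]] by blast
  with \<open>finite ?S\<close> show ?thesis using assms(2-4) by (auto simp: card_le_Suc0_iff_eq)
qed

section \<open>Right special and left special factors overlap\<close>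

lemma windows_inj_before_right_special:
  assumes rs: "right_special u (factor u j n)"
    and not_rs: "\<And>t. i < t \<Longrightarrow> t < j \<Longrightarrow> \<not> right_special u (factor u t n)"
  shows "inj_on (\<lambda>t. factor u t n) {Suc i..j}"
proof -
  have "factor u a n \<noteq> factor u b n" if "i < a" "a < b" "b \<le> j" for a b
  proof
    assume "factor u a n = factor u b n"
    then have "factor u (a + s) n = factor u (b + s) n" if "s \<le> j - b" for s
      using that
    proof (induction s)
      case (Suc s)
      then show ?case
        using factor_Suc_eq_if_not_right_special[of u "a + s" n "b + s"]
          not_rs[of "a + s"] \<open>i < a\<close> \<open>a < b\<close> by simp
    qed simp
    from this[of "j - b"] have "factor u (a + (j - b)) n = factor u j n"
      using \<open>b \<le> j\<close> by simp
    moreover have "i < a + (j - b)" "a + (j - b) < j" using that by auto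
    ultimately show False using rs not_rs by metis
  qed
  then show ?thesis
    by (intro inj_onI) (metis atLeastAtMost_iff Suc_le_eq linorder_neqE_nat)
qed

text \<open>A left special window is \<open>L\<close>, and its two possible predecessors are \<open>0 # butlast L\<close>
  and \<open>1 # butlast L\<close>, one of which is \<open>R\<close>.\<close>

lemma sturmian_predecessor_unique:
  assumes st: "sturmian u" and L: "left_special u L" "length L = length R"
    and RL: "tl R = butlast L"
    and "factor u (Suc t1) (length R) = factor u (Suc t2) (length R)"
    and "factor u t1 (length R) \<noteq> R" "factor u t2 (length R) \<noteq> R"
  shows "factor u t1 (length R) = factor u t2 (length R)"
proof (cases "left_special u (factor u (Suc t1) (length R))")
  case False
  then show ?thesis using factor_eq_if_not_left_special assms(5) by blast
next
  case True
  then have L_Suc: "factor u (Suc t1) (length R) = L"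
    using sturmian_left_special_unique[OF st _ L(1)] L(2) by simp
  have "R \<noteq> []" using assms(6) by (auto simp: factor_def)
  then obtain r w where R: "R = r # w" by (cases R) auto
  have pred_L: "factor u t (length R) = u t # w" if "factor u (Suc t) (length R) = L" for t
  proof -
    have "factor u t (length R) = butlast (u t # L)" using factor_eq_butlast[of u t] that by simp
    also have "\<dots> = u t # w" using L(2) RL R by (cases L rule: rev_cases) auto
    finally show ?thesis .
  qed
  have "factor u t1 (length R) = u t1 # w" "factor u t2 (length R) = u t2 # w"
    using pred_L L_Suc assms(5) by auto
  then show ?thesis using assms(6,7) R by (cases "u t1"; cases "u t2"; cases r) auto
qed

lemma eq_walking_back:
  fixes W :: "nat \<Rightarrow> 'a"
  assumes pred: "\<And>t1 t2. W (Suc t1) = W (Suc t2) \<Longrightarrow> W t1 \<noteq> R \<Longrightarrow> W t2 \<noteq> R \<Longrightarrow> W t1 = W t2"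
    and "W b = W j"
    and "\<And>t. a \<le> t \<Longrightarrow> t < b \<Longrightarrow> W t \<noteq> R" and "\<And>t. i < t \<Longrightarrow> t < j \<Longrightarrow> W t \<noteq> R"
    and "s \<le> b - a" "s < j - i"
  shows "W (b - s) = W (j - s)"
  using assms(5,6)
proof (induction s)
  case (Suc s)
  have "Suc (b - Suc s) = b - s" "Suc (j - Suc s) = j - s" using Suc.prems by auto
  moreover have "W (b - Suc s) \<noteq> R" "W (j - Suc s) \<noteq> R" using assms(3,4) Suc.prems by auto
  ultimately show ?case using pred Suc by (metis Suc_leD Suc_lessD)
qed (use assms(2) in simp)

text \<open>Walk back in step from the first occurrence of \<open>R\<close> after an occurrence of \<open>v\<close> and
  from \<open>j\<close>; the walks stay in step because predecessors are unique away from \<open>R\<close>. If the walk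
  from \<open>j\<close> reached \<open>Suc i\<close> first, the other walk would meet \<open>R\<close> early, as the window at
  \<open>Suc i\<close> is not left special.\<close>

lemma windows_cover_before_right_special:
  assumes st: "sturmian u"
    and R: "right_special u R" and L: "left_special u L" "length L = length R"
    and RL: "tl R = butlast L"
    and i: "factor u i (length R) = R" and j: "i < j" "factor u j (length R) = R"
    and between: "\<And>t. i < t \<Longrightarrow> t < j \<Longrightarrow> factor u t (length R) \<noteq> R"
    and succ_i: "factor u (Suc i) (length R) \<noteq> L"
    and v: "v \<in> langn u (length R)"
  shows "\<exists>t. i < t \<and> t \<le> j \<and> factor u t (length R) = v"
proof -
  define W where "W t = factor u t (length R)" for t
  have pred: "W t1 = W t2" if "W (Suc t1) = W (Suc t2)" "W t1 \<noteq> R" "W t2 \<noteq> R" for t1 t2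
    using sturmian_predecessor_unique[OF st L RL] that unfolding W_def by blast
  have R_lang: "R \<in> lang u" using R by (auto simp: right_special_def dest: lang_prefix)
  obtain a where a: "W a = v" using v by (auto simp: langn_def lang_iff_factor W_def)
  define b where "b = (LEAST b. a \<le> b \<and> W b = R)"
  have "\<exists>b\<ge>a. W b = R" using sturmian_occurs_after[OF st R_lang] by (simp add: W_def)
  then have b: "a \<le> b" "W b = R"
    unfolding b_def by (metis (mono_tags, lifting) LeastI_ex)+
  have b_min: "W t \<noteq> R" if "a \<le> t" "t < b" for t
    using not_less_Least[of t "\<lambda>b. a \<le> b \<and> W b = R"] that by (auto simp: b_def)
  have between_W: "W t \<noteq> R" if "i < t" "t < j" for t
    using between[OF that] by (simp add: W_def)
  have backwards: "W (b - s) = W (j - s)" if "s \<le> b - a" "s < j - i" for s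
    using eq_walking_back[where W = W and R = R and a = a and b = b and i = i and j = j]
      pred b_min between_W that b(2) j(2) by (simp add: W_def)
  show ?thesis
  proof (cases "b - a < j - i")
    case True
    then show ?thesis
      using backwards[of "b - a"] a b by (intro exI[of _ "j - (b - a)"]) (auto simp: W_def)
  next
    case False
    define t where "t = b - (j - i)"
    have "b - (j - i - 1) = Suc t" "j - (j - i - 1) = Suc i"
      using False j(1) by (auto simp: t_def)
    then have "W (Suc t) = W (Suc i)"
      using backwards[of "j - i - 1"] False j(1) by simp
    moreover have "\<not> left_special u (W (Suc i))"
      using succ_i sturmian_left_special_unique[OF st _ L(1)] L(2) by (auto simp: W_def)
    ultimately have "W t = R"
      using factor_eq_if_not_left_special[of u t] i by (simp add: W_def)
    moreover have "a \<le> t" "t < b" using False j(1) by (auto simp: t_def)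
    ultimately show ?thesis using b_min by blast
  qed
qed

lemma windows_bij_before_right_special:
  assumes st: "sturmian u"
    and R: "right_special u R" and L: "left_special u L" "length L = length R"
    and RL: "tl R = butlast L"
    and i: "factor u i (length R) = R" and j: "i < j" "factor u j (length R) = R"
    and between: "\<And>t. i < t \<Longrightarrow> t < j \<Longrightarrow> factor u t (length R) \<noteq> R"
    and succ_i: "factor u (Suc i) (length R) \<noteq> L"
  shows "bij_betw (\<lambda>t. factor u t (length R)) {Suc i..j} (langn u (length R))"
proof (rule bij_betw_imageI)
  show "inj_on (\<lambda>t. factor u t (length R)) {Suc i..j}"
  proof (rule windows_inj_before_right_special)
    show "\<not> right_special u (factor u t (length R))" if "i < t" "t < j" for t
      using between[OF that] sturmian_right_special_unique[OF st _ R] by auto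
  qed (use R j in simp)
  show "(\<lambda>t. factor u t (length R)) ` {Suc i..j} = langn u (length R)"
  proof
    show "langn u (length R) \<subseteq> (\<lambda>t. factor u t (length R)) ` {Suc i..j}"
      using windows_cover_before_right_special[OF assms] by (fastforce simp: Suc_le_eq)
  qed (auto simp: langn_def)
qed

lemma count_list_rotation_window_le:
  assumes "1 \<le> s" "s \<le> length Y"
  shows "count_list (take (length Y - 1) (drop s (Y @ butlast Y))) x \<le> count_list Y x"
proof -
  have "take (length Y - 1) (drop s (Y @ butlast Y)) = drop s Y @ take (s - 1) Y"
    using assms by (simp add: take_append take_butlast)
  moreover have "drop (s - 1) Y = Y ! (s - 1) # drop s Y"
    using assms by (metis Cons_nth_drop_Suc Suc_diff_1 Suc_le_eq diff_less less_le_trans zero_less_one)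
  then have "count_list (drop s Y) x \<le> count_list (drop (s - 1) Y) x" by simp
  ultimately show ?thesis
    using count_list_append[of "take (s - 1) Y" "drop (s - 1) Y" x] by simp
qed

lemma factor_take_drop: "s + m \<le> N \<Longrightarrow> factor u (i + s) m = take m (drop s (factor u i N))"
  by (rule nth_equalityI) (auto simp: add.assoc)

text \<open>If \<open>r \<noteq> x\<close>, follow the sequence from an occurrence of \<open>r w r\<close> to the next occurrence of the
  right special factor \<open>r w\<close>. The windows in between run once through all factors of length
  \<open>|w| + 1\<close>, so this stretch is \<open>r w r\<close> followed by \<open>r w\<close> and contains \<open>w x\<close> as a window of a
  rotation of \<open>r w r\<close>, which has fewer letters \<open>x\<close> than \<open>w x\<close>.\<close>

lemma sturmian_right_special_hd_eq_left_special_last: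
  assumes st: "sturmian u" and rs: "right_special u (r # w)" and ls: "left_special u (w @ [x])"
  shows "r = x"
proof (rule ccontr)
  assume "r \<noteq> x"
  define n where "n = Suc (length w)"
  define W where "W t = factor u t n" for t
  obtain i where i: "factor u i (Suc n) = r # w @ [r]"
    using rs by (auto simp: right_special_iff lang_iff_factor n_def)
  then have Wi: "W i = r # w" and W_Suc_i: "W (Suc i) = w @ [r]"
    using factor_Suc[of u i n] factor_Suc_Cons[of u i n] by (auto simp: W_def n_def)
  have "r # w \<in> lang u" using rs lang_prefix[of "r # w"] by (auto simp: right_special_def)
  then have "\<exists>j\<ge>Suc i. W j = r # w"
    using sturmian_occurs_after[OF st, of "r # w" "Suc i"] by (simp add: W_def n_def)
  define j where "j = (LEAST j. Suc i \<le> j \<and> W j = r # w)"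
  have j: "i < j" "W j = r # w"
    using LeastI_ex[OF \<open>\<exists>j\<ge>Suc i. _\<close>] by (auto simp: j_def)
  have "W t \<noteq> r # w" if "i < t" "t < j" for t
    using not_less_Least[of t "\<lambda>j. Suc i \<le> j \<and> W j = r # w"] that by (auto simp: j_def)
  then have bij: "bij_betw W {Suc i..j} (langn u n)"
    using windows_bij_before_right_special[OF st rs ls, of i j] Wi W_Suc_i j \<open>r \<noteq> x\<close>
    by (simp add: W_def[abs_def] n_def)
  then have "j = i + Suc n"
    using bij_betw_same_card card_langn_sturmian[OF st, of n] j(1) by (fastforce simp: n_def)
  define Y where "Y = r # w @ [r]"
  have "factor u i (Suc n + n) = Y @ butlast Y"
    using i j(2) factor_add[of u i "Suc n" n] \<open>j = i + Suc n\<close> by (simp add: W_def Y_def)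
  moreover have "w @ [x] \<in> langn u n"
    using ls lang_Cons[of False "w @ [x]"] by (simp add: langn_def n_def left_special_def)
  then obtain t where t: "i < t" "t \<le> j" "W t = w @ [x]"
    using bij unfolding bij_betw_def by (metis Suc_le_eq atLeastAtMost_iff imageE)
  ultimately have "w @ [x] = take (length Y - 1) (drop (t - i) (Y @ butlast Y))"
    using factor_take_drop[of "t - i" n "Suc n + n" u i] \<open>j = i + Suc n\<close>
    by (simp add: W_def Y_def n_def)
  then have "count_list (w @ [x]) x \<le> count_list Y x"
    using count_list_rotation_window_le[of "t - i" Y x] t \<open>j = i + Suc n\<close>
    by (simp add: Y_def n_def)
  then show False using \<open>r \<noteq> x\<close> by (simp add: Y_def)
qed

section \<open>The one-sided and two-sided shift spaces\<close>

lemma funpow_shift: "(shift ^^ n) u i = u (n + i)"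
  by (induction n arbitrary: i) (auto simp: shift_def)

text \<open>The basic open sets of the product topology fix finitely many coordinates.\<close>

lemma Xplus_iff_prefixes: "c \<in> Xplus u \<longleftrightarrow> (\<forall>N. factor c 0 N \<in> lang u)"
proof
  assume c: "c \<in> Xplus u"
  show "\<forall>N. factor c 0 N \<in> lang u"
  proof
    fix N
    let ?S = "{f. \<forall>i\<in>{..<N}. f ((\<lambda>i. i) i) \<in> {c i}}"
    have "open ?S" by (rule product_topology_basis') (auto intro: open_discrete)
    moreover have "c \<in> ?S" by simp
    ultimately have "{(shift ^^ n) u | n. True} \<inter> ?S \<noteq> {}"
      using c unfolding Xplus_def closure_iff_nhds_not_empty by blast
    then obtain n where "\<forall>i<N. (shift ^^ n) u i = c i" by auto
    then have "factor u n N = factor c 0 N" by (intro nth_equalityI) (auto simp: funpow_shift)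
    then show "factor c 0 N \<in> lang u" by (metis factor_in_lang)
  qed
next
  assume prefixes: "\<forall>N. factor c 0 N \<in> lang u"
  show "c \<in> Xplus u"
    unfolding Xplus_def closure_iff_nhds_not_empty
  proof (intro allI impI)
    fix A S assume "S \<subseteq> A" "open S" "c \<in> S"
    then obtain U where U: "finite {i \<in> UNIV. U i \<noteq> topspace euclidean}"
      "c \<in> Pi\<^sub>E UNIV U" "Pi\<^sub>E UNIV U \<subseteq> S"
      unfolding open_fun_def openin_product_topology_alt by blast
    have "finite {i. U i \<noteq> UNIV}" using U(1) by simp
    then obtain N where N: "{i. U i \<noteq> UNIV} \<subseteq> {..<N}"
      using finite_nat_bounded by blast
    obtain k where k: "factor u k N = factor c 0 N"
      using prefixes by (auto simp: lang_iff_factor)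
    have "(shift ^^ k) u i \<in> U i" for i
    proof (cases "i < N")
      case True
      then have "u (k + i) = c i" using k by (metis add_0 nth_factor)
      then show ?thesis using U(2) by (auto simp: funpow_shift)
    next
      case False
      then show ?thesis using N by auto
    qed
    then show "{(shift ^^ n) u | n. True} \<inter> A \<noteq> {}"
      using U(3) \<open>S \<subseteq> A\<close> by blast
  qed
qed

lemma Xplus_factor_in_lang: "c \<in> Xplus u \<Longrightarrow> factor c t N \<in> lang u"
  using Xplus_iff_prefixes[of c u] factor_add[of c 0 t N] lang_suffix by (metis add_0)

lemma Xplus_shift: "c \<in> Xplus u \<Longrightarrow> (\<lambda>i. c (t + i)) \<in> Xplus u"
proof -
  assume "c \<in> Xplus u"
  moreover have "factor (\<lambda>i. c (t + i)) 0 N = factor c t N" for N by (simp add: factor_def)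
  ultimately show ?thesis using Xplus_factor_in_lang by (simp add: Xplus_iff_prefixes)
qed

lemma orbit_in_Xplus: "(\<lambda>i. u (k + i)) \<in> Xplus u"
proof -
  have "factor (\<lambda>i. u (k + i)) 0 N = factor u k N" for N by (simp add: factor_def)
  then show ?thesis by (simp add: Xplus_iff_prefixes)
qed

lemma Xtilde_tail: "B \<in> Xtilde u \<Longrightarrow> (\<lambda>i. B (p + int i)) \<in> Xplus u"
  unfolding Xtilde_def by blast

lemma Xtilde_shift:
  assumes "B \<in> Xtilde u" shows "(\<lambda>q. B (q + d)) \<in> Xtilde u"
  unfolding Xtilde_def
proof (intro CollectI allI)
  fix p
  have "(\<lambda>i. B (p + d + int i)) \<in> Xplus u" using assms unfolding Xtilde_def by blast
  moreover have "(\<lambda>i. B (p + d + int i)) = (\<lambda>i. B (p + int i + d))" by (simp add: algebra_simps)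
  ultimately show "(\<lambda>i. B (p + int i + d)) \<in> Xplus u" by simp
qed

lemma Xplus_extends_left:
  assumes st: "sturmian u" and c: "c \<in> Xplus u"
  shows "\<exists>e. case_nat e c \<in> Xplus u"
proof -
  have "\<exists>e. \<forall>N. e # factor c 0 N \<in> lang u"
  proof (rule ccontr)
    assume "\<not> ?thesis"
    then obtain N1 N2 where N1: "True # factor c 0 N1 \<notin> lang u"
      and N2: "False # factor c 0 N2 \<notin> lang u"
      by blast
    define N where "N = max N1 N2"
    obtain e where e: "e # factor c 0 N \<in> lang u"
      using sturmian_extends_left[OF st] c Xplus_iff_prefixes by blast
    have "e # factor c 0 M \<in> lang u" if "M \<le> N" for M
      using e lang_prefix[of "e # factor c 0 M"] factor_add[of c 0 M "N - M"] that by simp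
    then show False using N1 N2 by (cases e) (auto simp: N_def)
  qed
  then obtain e where "e # factor c 0 N \<in> lang u" for N by blast
  moreover have "factor (case_nat e c) 0 (Suc N) = e # factor c 0 N" for N
    unfolding factor_Suc_Cons by (simp add: factor_def)
  ultimately have "factor (case_nat e c) 0 N \<in> lang u" for N
    by (cases N) (simp_all add: factor_def)
  then show ?thesis using Xplus_iff_prefixes by blast
qed

lemma Xplus_left_extensions:
  assumes st: "sturmian u" and c: "c \<in> Xplus u"
  obtains z where "z 0 = c" "\<And>k. z k \<in> Xplus u" "\<And>k i. z (Suc k) (Suc i) = z k i"
proof -
  have step: "\<exists>d. d \<in> Xplus u \<and> (\<forall>i. d (Suc i) = e i)" if "e \<in> Xplus u" for e
    using Xplus_extends_left[OF st that] by fastforce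
  define z where "z = rec_nat c (\<lambda>k zk. SOME d. d \<in> Xplus u \<and> (\<forall>i. d (Suc i) = zk i))"
  have z_Suc: "z (Suc k) \<in> Xplus u \<and> (\<forall>i. z (Suc k) (Suc i) = z k i)" if "z k \<in> Xplus u" for k
    using someI_ex[OF step[OF that]] by (simp add: z_def)
  have z: "z k \<in> Xplus u" for k
    by (induction k) (use c z_Suc in \<open>simp_all add: z_def\<close>)
  show thesis
    using that[of z] z z_Suc by (simp add: z_def)
qed

lemma Xplus_extends_Xtilde:
  assumes st: "sturmian u" and c: "c \<in> Xplus u"
  shows "\<exists>B\<in>Xtilde u. \<forall>i. B (int i) = c i"
proof -
  obtain z where z_0: "z 0 = c" and z: "\<And>k. z k \<in> Xplus u"
    and z_Suc: "\<And>k i. z (Suc k) (Suc i) = z k i"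
    using Xplus_left_extensions[OF st c] by blast
  have z_add: "z (K + j) (i + j) = z K i" for K i j
    by (induction j) (simp_all add: z_Suc)
  define B where "B q = (if q \<ge> 0 then c (nat q) else z (nat (- q)) 0)" for q :: int
  have B_z: "B q = z K (nat (q + int K))" if "q + int K \<ge> 0" for q K
  proof (cases "q \<ge> 0")
    case True
    then show ?thesis
      using z_add[where K = 0 and i = "nat q" and j = K] by (simp add: B_def z_0 nat_add_distrib)
  next
    case False
    then have "nat (q + int K) = K - nat (- q)" "nat (- q) + (K - nat (- q)) = K"
      using that by auto
    then show ?thesis
      using z_add[where K = "nat (- q)" and i = 0 and j = "K - nat (- q)"] False
      by (simp add: B_def)
  qed
  have "B \<in> Xtilde u"
    unfolding Xtilde_def
  proof (intro CollectI allI)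
    fix p :: int
    have "(\<lambda>i. B (p + int i)) = (\<lambda>i. z (nat (- p)) (nat (p + int (nat (- p))) + i))"
      using B_z[of "p + int _" "nat (- p)"] by (auto simp: nat_add_distrib)
    then show "(\<lambda>i. B (p + int i)) \<in> Xplus u" using Xplus_shift z by metis
  qed
  moreover have "B (int i) = c i" for i by (simp add: B_def)
  ultimately show ?thesis by blast
qed

section \<open>Followers and significant blocks\<close>

definition block_at :: "(int \<Rightarrow> bool) \<Rightarrow> int \<Rightarrow> nat \<Rightarrow> bool list" where
  "block_at B p N = map (\<lambda>i. B (p + int i)) [0..<N]"

lemma length_block_at [simp]: "length (block_at B p N) = N"
  by (simp add: block_at_def)

lemma block_at_add: "block_at B p (M + N) = block_at B p M @ block_at B (p + int M) N"
  by (rule nth_equalityI) (auto simp: block_at_def nth_append add.assoc)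

lemma block_at_Suc: "block_at B p (Suc N) = B p # block_at B (p + 1) N"
  using block_at_add[of B p 1 N] by (simp add: block_at_def)

lemma block_at_shift: "block_at (\<lambda>q. B (q + d)) p N = block_at B (p + d) N"
  by (simp add: block_at_def algebra_simps)

lemma block_at_nonneg: "block_at B (int k) N = factor (\<lambda>i. B (int i)) k N"
  by (simp add: block_at_def factor_def)

lemma Xtilde_block_at_in_lang: "B \<in> Xtilde u \<Longrightarrow> block_at B p N \<in> lang u"
  using Xtilde_tail[of B u p] Xplus_iff_prefixes[of "\<lambda>i. B (p + int i)" u]
  by (simp add: block_at_def factor_def)

text \<open>The definition of \<open>fol\<close> places the block at positions \<open>1 - length a, \<dots>, 0\<close>.\<close>

lemma fol_iff:
  "c \<in> fol u a \<longleftrightarrow>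
     (\<exists>B\<in>Xtilde u. block_at B (1 - int (length a)) (length a) = a \<and> c = (\<lambda>i. B (int i)))"
proof -
  have nth: "block_at B (1 - int (length a)) (length a) ! j = B (int j - int (length a - 1))"
    if "j < length a" for B j
    using that by (simp add: block_at_def of_nat_diff algebra_simps)
  have key: "block_at B (1 - int (length a)) (length a) = a \<longleftrightarrow>
      (\<forall>j<length a. B (int j - int (length a - 1)) = a ! j)" for B
    using nth[of _ B] by (auto simp: list_eq_iff_nth_eq)
  have tail: "(\<lambda>i. B (int i)) \<in> Xplus u" if "B \<in> Xtilde u" for B
    using Xtilde_tail[OF that, of 0] by simp
  show ?thesis
  proof
    assume "c \<in> fol u a"
    then obtain B where "B \<in> Xtilde u" "\<forall>j<length a. B (int j - int (length a - 1)) = a ! j"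
      "\<forall>i. c i = B (int i)"
      unfolding fol_def by blast
    then show "\<exists>B\<in>Xtilde u. block_at B (1 - int (length a)) (length a) = a \<and> c = (\<lambda>i. B (int i))"
      using key by auto
  next
    assume "\<exists>B\<in>Xtilde u. block_at B (1 - int (length a)) (length a) = a \<and> c = (\<lambda>i. B (int i))"
    then obtain B where "B \<in> Xtilde u" "block_at B (1 - int (length a)) (length a) = a"
      "c = (\<lambda>i. B (int i))"
      by blast
    then show "c \<in> fol u a" unfolding fol_def using key tail by auto
  qed
qed

lemma fol_subset_fol_tl: "fol u a \<subseteq> fol u (tl a)"
proof (cases a)
  case (Cons e v)
  show ?thesis
  proof
    fix c assume "c \<in> fol u a"
    then obtain B where "B \<in> Xtilde u" "block_at B (1 - int (length a)) (length a) = a"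
      "c = (\<lambda>i. B (int i))"
      unfolding fol_iff by blast
    then show "c \<in> fol u (tl a)"
      unfolding fol_iff using Cons by (auto simp: block_at_Suc algebra_simps)
  qed
qed simp

lemma fol_snoc:
  assumes "a \<noteq> []"
  shows "c \<in> fol u (a @ [b]) \<longleftrightarrow> c 0 = b \<and> case_nat (last a) c \<in> fol u a"
proof
  assume "c \<in> fol u (a @ [b])"
  then obtain B where B: "B \<in> Xtilde u" "block_at B (- int (length a)) (length a + 1) = a @ [b]"
    "c = (\<lambda>i. B (int i))"
    unfolding fol_iff by auto
  then have a: "block_at B (- int (length a)) (length a) = a" and "B 0 = b"
    by (auto simp: block_at_add block_at_def)
  define B' where "B' q = B (q + - 1)" for q
  have "B' \<in> Xtilde u" using Xtilde_shift[OF B(1), of "- 1"] by (simp add: B'_def[abs_def])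
  moreover have "block_at B' (1 - int (length a)) (length a) = a"
    using a by (simp add: B'_def block_at_def algebra_simps)
  moreover have "last a = B (- 1)"
  proof -
    have "int (length a - Suc 0) - int (length a) = - 1" using assms by (cases a) auto
    then show ?thesis using arg_cong[OF a, of last] assms by (simp add: block_at_def last_map)
  qed
  then have "case_nat (last a) c = (\<lambda>i. B' (int i))"
    using B(3) by (auto simp: B'_def fun_eq_iff split: nat.split)
  ultimately show "c 0 = b \<and> case_nat (last a) c \<in> fol u a"
    using \<open>B 0 = b\<close> B(3) unfolding fol_iff by auto
next
  assume "c 0 = b \<and> case_nat (last a) c \<in> fol u a"
  then obtain B' where B': "B' \<in> Xtilde u" "block_at B' (1 - int (length a)) (length a) = a"
    "case_nat (last a) c = (\<lambda>i. B' (int i))" and "c 0 = b"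
    unfolding fol_iff by blast
  define B where "B q = B' (q + 1)" for q
  have "B \<in> Xtilde u" using Xtilde_shift[OF B'(1), of 1] by (simp add: B_def[abs_def])
  moreover have "c = (\<lambda>i. B (int i))"
    using fun_cong[OF B'(3), of "Suc _"] by (auto simp: B_def add.commute)
  moreover have "block_at B (- int (length a)) (length a + 1) = a @ [b]"
    using B'(2) \<open>c 0 = b\<close> \<open>c = _\<close> by (simp add: block_at_add B_def[abs_def] block_at_shift
        algebra_simps) (simp add: block_at_def B_def)
  ultimately show "c \<in> fol u (a @ [b])" unfolding fol_iff by auto
qed

lemma significant_butlast:
  assumes "2 \<le> length a" "a \<in> lang u" "significant u (a @ [b])"
  shows "significant u a"
proof -
  have "tl a \<noteq> []" and last_tl: "last (tl a) = last a" using assms(1) by (cases a; auto)+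
  have "fol u (a @ [b]) \<subset> fol u (tl a @ [b])"
    using assms by (cases a) (auto simp: significant_def)
  then obtain c where "c \<in> fol u (tl a @ [b])" "c \<notin> fol u (a @ [b])" by blast
  then have "c 0 = b" "case_nat (last a) c \<in> fol u (tl a)"
    using fol_snoc[OF \<open>tl a \<noteq> []\<close>] last_tl by auto
  moreover have "a \<noteq> []" using assms(1) by auto
  ultimately have "case_nat (last a) c \<notin> fol u a"
    using fol_snoc \<open>c \<notin> fol u (a @ [b])\<close> by blast
  with \<open>case_nat (last a) c \<in> fol u (tl a)\<close> have "fol u a \<subset> fol u (tl a)" using fol_subset_fol_tl by blast
  then show ?thesis using assms(1,2) by (simp add: significant_def)
qed

lemma not_significant_if_not_left_extendable:
  assumes "v \<noteq> []" and "(\<not> e) # v \<notin> lang u"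
  shows "\<not> significant u (e # v)"
proof -
  have "fol u v \<subseteq> fol u (e # v)"
  proof
    fix c assume "c \<in> fol u v"
    then obtain B where B: "B \<in> Xtilde u" "block_at B (1 - int (length v)) (length v) = v"
      "c = (\<lambda>i. B (int i))"
      unfolding fol_iff by blast
    have block: "block_at B (- int (length v)) (Suc (length v)) = B (- int (length v)) # v"
      using B(2) by (simp add: block_at_Suc algebra_simps)
    then have "B (- int (length v)) # v \<in> lang u"
      using Xtilde_block_at_in_lang[OF B(1)] by metis
    then have "B (- int (length v)) = e"
      using assms(2) by (cases e; cases "B (- int (length v))") auto
    then show "c \<in> fol u (e # v)" unfolding fol_iff using B block by auto
  qed
  then show ?thesis using assms(1) by (auto simp: significant_def)
qed

lemma fol_at_occurrence:
  assumes "sturmian u" "factor u k (length a) = a" "a \<noteq> []"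
  shows "(\<lambda>i. u (k + length a - 1 + i)) \<in> fol u a"
proof -
  obtain B where B: "B \<in> Xtilde u" "\<And>i. B (int i) = u (k + i)"
    using Xplus_extends_Xtilde[OF assms(1) orbit_in_Xplus[of u k]] by blast
  define B' where "B' q = B (q + int (length a - 1))" for q
  have "B' \<in> Xtilde u" using Xtilde_shift[OF B(1)] by (simp add: B'_def[abs_def])
  moreover have "block_at B' (1 - int (length a)) (length a) = a"
  proof -
    have "1 - int (length a) + int i + int (length a - 1) = int i" for i
      using assms(3) by (cases a) auto
    then show ?thesis using assms(2) B(2) by (simp add: block_at_def B'_def factor_def)
  qed
  moreover have "(\<lambda>i. u (k + length a - 1 + i)) = (\<lambda>i. B' (int i))"
    using assms(3) B(2) by (cases a) (simp_all add: B'_def ac_simps flip: of_nat_add)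
  ultimately show ?thesis unfolding fol_iff by blast
qed

lemma fol_continues_block:
  assumes "c \<in> fol u a"
  shows "a @ factor c 1 N \<in> lang u"
proof -
  obtain B where B: "B \<in> Xtilde u" "block_at B (1 - int (length a)) (length a) = a"
    "c = (\<lambda>i. B (int i))"
    using assms unfolding fol_iff by blast
  have "block_at B (1 - int (length a)) (length a + N) = a @ factor c 1 N"
    using B(2,3) by (simp add: block_at_add flip: block_at_nonneg)
  then show ?thesis using Xtilde_block_at_in_lang[OF B(1)] by metis
qed

lemma significant_if_right_context:
  assumes st: "sturmian u" and "v \<noteq> []" and "e # v \<in> lang u"
    and "(\<not> e) # v @ s \<in> lang u" and "e # v @ s \<notin> lang u"
  shows "significant u (e # v)"
proof -
  obtain k where k: "factor u k (Suc (length v + length s)) = (\<not> e) # v @ s"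
    using assms(4) by (auto simp: lang_iff_factor)
  then have "factor u (Suc k) (length v + length s) = v @ s"
    by (simp add: factor_Suc_Cons)
  then have v: "factor u (Suc k) (length v) = v" and s: "factor u (Suc k + length v) (length s) = s"
    by (simp_all add: factor_add)
  define c where "c i = u (Suc k + length v - 1 + i)" for i
  have "c \<in> fol u v" using fol_at_occurrence[OF st v \<open>v \<noteq> []\<close>] by (simp add: c_def[abs_def])
  moreover have "c \<notin> fol u (e # v)"
  proof
    assume "c \<in> fol u (e # v)"
    moreover have "factor c 1 (length s) = s"
      using s \<open>v \<noteq> []\<close> by (simp add: c_def factor_def)
    ultimately show False using fol_continues_block[of c u "e # v" "length s"] assms(5) by simp
  qed
  ultimately have "fol u (e # v) \<subset> fol u v"
    using fol_subset_fol_tl[of u "e # v"] by auto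
  then show ?thesis using assms(2,3) by (simp add: significant_def Suc_le_eq)
qed

section \<open>The longest significant suffix\<close>

lemma suffix_same_length: "suffix s a \<Longrightarrow> suffix t a \<Longrightarrow> length s = length t \<Longrightarrow> s = t"
  using suffix_length_suffix suffix_order.antisym by (metis order_refl)

lemma sig_eqI:
  assumes "suffix s a" "significant u s"
    and "\<And>t. suffix t a \<Longrightarrow> significant u t \<Longrightarrow> length t \<le> length s"
  shows "sig u a = s"
  unfolding sig_def
proof (rule the_equality)
  fix s' assume "suffix s' a \<and> significant u s' \<and>
    (\<forall>t. suffix t a \<and> significant u t \<longrightarrow> length t \<le> length s')"
  then show "s' = s" using assms suffix_same_length by (metis le_antisym)
qed (use assms in blast)

lemma sig_greatest:
  assumes "a \<noteq> []" and "[last a] \<in> lang u"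
  shows "suffix (sig u a) a" "significant u (sig u a)"
    "\<And>t. suffix t a \<Longrightarrow> significant u t \<Longrightarrow> length t \<le> length (sig u a)"
proof -
  define S where "S = {t. suffix t a \<and> significant u t}"
  have "finite S"
    by (rule finite_subset[of _ "set (suffixes a)"]) (auto simp: S_def)
  have "suffix [last a] a" using assms(1) by (metis append_butlast_last_id suffix_def)
  then have "[last a] \<in> S" using assms(2) by (simp add: S_def significant_def)
  then obtain s where s: "s \<in> S" "length s = Max (length ` S)"
    using Max_in[of "length ` S"] \<open>finite S\<close> by fastforce
  have "length t \<le> length s" if "t \<in> S" for t
    using that s(2) \<open>finite S\<close> by simp
  then have "sig u a = s" using s(1) by (intro sig_eqI) (auto simp: S_def)
  then show "suffix (sig u a) a" "significant u (sig u a)"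
    "\<And>t. suffix t a \<Longrightarrow> significant u t \<Longrightarrow> length t \<le> length (sig u a)"
    using s(1) \<open>\<And>t. t \<in> S \<Longrightarrow> _\<close> by (auto simp: S_def)
qed

section \<open>Special blocks of the left special sequence\<close>

lemma length_Lblock [simp]: "length (Lblock l k) = k"
  by (simp add: Lblock_def)

lemma Lblock_Suc: "Lblock l (Suc k) = Lblock l k @ [l (Suc k)]"
  by (simp add: Lblock_def)

lemma Lblock_take: "k \<le> k' \<Longrightarrow> Lblock l k = take k (Lblock l k')"
  by (simp add: Lblock_def take_map del: upt_Suc)

lemma left_special_Lblock: "left_special_seq u l \<Longrightarrow> left_special u (Lblock l k)"
  by (simp add: left_special_seq_def left_special_def)

lemma singleton_in_lang: "left_special_seq u l \<Longrightarrow> [c] \<in> lang u"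
  using left_special_Lblock[of u l 0] by (cases c) (auto simp: left_special_def Lblock_def)

lemma right_special_Lblock_hd:
  assumes "sturmian u" "left_special_seq u l" "right_special u (e # Lblock l k)"
  shows "e = l (Suc k)"
  using sturmian_right_special_hd_eq_left_special_last[OF assms(1,3)]
    left_special_Lblock[OF assms(2), of "Suc k"] by (simp add: Lblock_Suc)

section \<open>Arrows out of a right special significant block\<close>

context
  fixes u l :: "nat \<Rightarrow> bool" and x w :: bool and m n :: nat
  assumes sturmian: "sturmian u" and left_special_l: "left_special_seq u l"
    and m: "1 \<le> m" "m < n"
    and consecutive: "consecutive_rs u (x # Lblock l (n - 1)) (w # Lblock l (m - 1))"
begin

lemma long_block_right_special: "right_special u (x # Lblock l (n - 1))"
  and long_block_significant: "significant u (x # Lblock l (n - 1))"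
  and short_block_right_special: "right_special u (w # Lblock l (m - 1))"
  and no_block_between:
    "\<And>v. right_special u v \<Longrightarrow> significant u v \<Longrightarrow> m < length v \<Longrightarrow> length v < n \<Longrightarrow> False"
  using consecutive m by (auto simp: consecutive_rs_def)

lemma long_block_hd: "x = l n"
  using right_special_Lblock_hd[OF sturmian left_special_l long_block_right_special] m by simp

lemma short_block_hd: "w = l m"
  using right_special_Lblock_hd[OF sturmian left_special_l short_block_right_special] m by simp

lemma short_block_suffix: "suffix (w # Lblock l (m - 1)) (x # Lblock l (n - 1))"
proof -
  let ?\<alpha> = "x # Lblock l (n - 1)"
  have "right_special u (drop (n - m) ?\<alpha>)"
    using right_special_suffix[of u "take (n - m) ?\<alpha>"] long_block_right_special by simp
  then have "drop (n - m) ?\<alpha> = w # Lblock l (m - 1)"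
    using sturmian_right_special_unique[OF sturmian _ short_block_right_special] m by simp
  then show ?thesis by (metis suffix_drop)
qed

lemma long_block_extends: "x # Lblock l (n - 1) @ [b] \<in> lang u"
  using long_block_right_special by (simp add: right_special_iff)

lemma significant_suffix_short:
  assumes "b \<noteq> l n" and "suffix t (x # Lblock l (n - 1) @ [b])" and "significant u t"
  shows "length t \<le> Suc m"
proof (rule ccontr)
  assume long: "\<not> length t \<le> Suc m"
  then obtain t' where t': "t = t' @ [b]" "suffix t' (x # Lblock l (n - 1))"
    using assms(2) by (auto simp: suffix_snoc[of t "x # Lblock l (n - 1)" b, simplified])
  have "length t' \<le> n" using suffix_length_le[OF t'(2)] m by simp
  show False
  proof (cases "length t' = n")
    case True
    then have t: "t = x # Lblock l (n - 1) @ [b]"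
      using t' suffix_same_length[OF t'(2) suffix_order.refl] m by simp
    have "\<not> left_special u (Lblock l (n - 1) @ [b])"
    proof
      assume "left_special u (Lblock l (n - 1) @ [b])"
      then have "Lblock l (n - 1) @ [b] = Lblock l n"
        using sturmian_left_special_unique[OF sturmian _ left_special_Lblock[OF left_special_l]] m
        by simp
      then show False using assms(1) Lblock_Suc[of l "n - 1"] m by simp
    qed
    then have "(\<not> x) # Lblock l (n - 1) @ [b] \<notin> lang u"
      using long_block_extends left_special_of_two[of x _ u "\<not> x"] by auto
    then show False
      using not_significant_if_not_left_extendable[of "Lblock l (n - 1) @ [b]"] assms(3) t by simp
  next
    case False
    have "x # Lblock l (n - 1) \<in> lang u"
      using long_block_extends[of False] lang_prefix[of "x # Lblock l (n - 1)" "[False]"] by simp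
    then have "t' \<in> lang u"
      using t'(2) lang_suffix by (auto simp: suffix_def)
    then have "significant u t'"
      using significant_butlast[of t' u b] assms(3) t'(1) long m by simp
    moreover have "right_special u t'"
      using t'(2) long_block_right_special right_special_suffix by (auto simp: suffix_def)
    ultimately show False
      using no_block_between[of t'] long False \<open>length t' \<le> n\<close> t'(1) by simp
  qed
qed

lemma hb_arrow_if_heads_differ:
  assumes "x \<noteq> w"
  shows "hb_arrow u (x # Lblock l (n - 1)) (w # Lblock l m)"
proof -
  let ?\<alpha> = "x # Lblock l (n - 1)" and ?\<gamma> = "w # Lblock l m"
  have Lm: "Lblock l m = Lblock l (m - 1) @ [l m]" and Ln: "Lblock l n = Lblock l (n - 1) @ [l n]"
    using m Lblock_Suc[of l "m - 1"] Lblock_Suc[of l "n - 1"] by simp_all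
  have "suffix ?\<gamma> (?\<alpha> @ [l m])"
    using short_block_suffix snoc_suffix_snoc[of "w # Lblock l (m - 1)" "l m" ?\<alpha>] by (simp add: Lm)
  then have "?\<gamma> \<in> lang u"
    using long_block_extends[of "l m"] by (auto simp: suffix_def dest: lang_suffix)
  define s where "s = drop m (Lblock l (n - 1)) @ [\<not> l n]"
  have Lm_s: "Lblock l m @ s = Lblock l (n - 1) @ [\<not> l n]"
    using Lblock_take[of m "n - 1" l] m by (simp add: s_def)
  have "significant u ?\<gamma>"
  proof (rule significant_if_right_context[OF sturmian])
    show "Lblock l m \<noteq> []" using m by (simp add: Lblock_def)
    show "(\<not> w) # Lblock l m @ s \<in> lang u"
      using long_block_extends[of "\<not> l n"] assms by (cases x; cases w) (simp_all add: Lm_s)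
    show "w # Lblock l m @ s \<notin> lang u"
    proof
      assume "w # Lblock l m @ s \<in> lang u"
      moreover have "w # Lblock l n \<in> lang u"
        using left_special_Lblock[OF left_special_l] by (cases w) (auto simp: left_special_def)
      ultimately have "right_special u (w # Lblock l (n - 1))"
        using right_special_of_two[of "w # Lblock l (n - 1)" "\<not> l n" u "l n"] Lm_s Ln by simp
      then have "w # Lblock l (n - 1) = ?\<alpha>"
        using sturmian_right_special_unique[OF sturmian _ long_block_right_special] by simp
      then show False using assms by simp
    qed
  qed fact
  moreover have "sig u (?\<alpha> @ [l m]) = ?\<gamma>"
    using \<open>suffix ?\<gamma> _\<close> \<open>significant u ?\<gamma>\<close>
      significant_suffix_short[of "l m"] assms long_block_hd short_block_hd
    by (intro sig_eqI) auto
  ultimately show ?thesis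
    unfolding hb_arrow_def using long_block_significant long_block_extends[of "l m"]
    by (auto intro!: exI[where x = "l m"])
qed

lemma hb_arrow_to_sig:
  assumes "y \<noteq> l n"
  shows "hb_arrow u (x # Lblock l (n - 1)) (sig u (w # Lblock l (m - 1) @ [y]))"
proof -
  let ?\<alpha> = "x # Lblock l (n - 1)" and ?\<beta> = "w # Lblock l (m - 1)"
  let ?s = "sig u (?\<beta> @ [y])"
  have s: "suffix ?s (?\<beta> @ [y])" "significant u ?s"
    "\<And>t. suffix t (?\<beta> @ [y]) \<Longrightarrow> significant u t \<Longrightarrow> length t \<le> length ?s"
    using sig_greatest[of "?\<beta> @ [y]" u] singleton_in_lang[OF left_special_l] by auto
  have \<beta>_suffix: "suffix (?\<beta> @ [y]) (?\<alpha> @ [y])"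
    using short_block_suffix snoc_suffix_snoc[of ?\<beta> y ?\<alpha>] by simp
  have "sig u (?\<alpha> @ [y]) = ?s"
  proof (rule sig_eqI)
    show "suffix ?s (?\<alpha> @ [y])" using s(1) \<beta>_suffix suffix_order.trans by blast
    fix t assume t: "suffix t (?\<alpha> @ [y])" "significant u t"
    then have "length t \<le> length (?\<beta> @ [y])"
      using significant_suffix_short[OF assms] m by simp
    then have "suffix t (?\<beta> @ [y])" using suffix_length_suffix[OF t(1) \<beta>_suffix] by simp
    then show "length t \<le> length ?s" using s(3) t(2) by blast
  qed (fact s(2))
  then show ?thesis
    unfolding hb_arrow_def using long_block_significant s(2) long_block_extends[of y]
    by (auto intro!: exI[where x = y])
qed

end

theorem lemma4p12:
  fixes u l :: "nat \<Rightarrow> bool" and x w y :: bool and m n :: nat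
  assumes "sturmian u"
    and "left_special_seq u l"
    and "1 \<le> m" and "m < n"
    and "consecutive_rs u (x # Lblock l (n - 1)) (w # Lblock l (m - 1))"
    and "y \<noteq> l n"
  shows "(x \<noteq> w \<longrightarrow> hb_arrow u (x # Lblock l (n - 1)) (w # Lblock l m))
       \<and> (x = w \<longrightarrow> hb_arrow u (x # Lblock l (n - 1)) (sig u (w # Lblock l (m - 1) @ [y])))"
  using hb_arrow_if_heads_differ[OF assms(1-5)] hb_arrow_to_sig[OF assms(1-6)] by blast

end
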